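(* Let $\lambda$ be a nonempty partition. (1) For every integer $k\geq 2$, \[ \frac{s_\lambda(1^k)}{k}\geq \frac{s_\lambda(1^{k-1})}{k-1}. \] (2) If moreover $2\leq \ell(\lambda)\leq k-1$, then \[ \frac{s_\lambda(1^k)}{k}\geq \frac{s_\lambda(1^{k-1})}{k-1}+\frac{1}{k}. \]
   Context: $s_\lambda$ is the Schur polynomial of $\lambda$, and $s_\lambda(1^m)$ denotes its evaluation at $(1,\dots,1)$ with $m$ ones; equivalently, $s_\lambda(1^m)$ is the number of semistandard Young tableaux of shape $\lambda$ with entries in $\{1,\dots,m\}$ (rows weakly increasing left to right, columns strictly increasing top to bottom). $\ell(\lambda)$ is the number of nonzero parts of $\lambda$. *)

theory Defs
  imports Complex_Main
begin

definition is_partition :: "nat list \<Rightarrow> bool" where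
  "is_partition lam \<longleftrightarrow> sorted_wrt (\<ge>) lam \<and> (\<forall>x\<in>set lam. 0 < x)"

definition part_length :: "nat list \<Rightarrow> nat" where
  "part_length lam = length (filter (\<lambda>x. (0::nat) < x) lam)"

(* cells (i,j) of the Young diagram, 0-indexed: row i, column j *)
definition young_cells :: "nat list \<Rightarrow> (nat \<times> nat) set" where
  "young_cells lam = {(i, j). i < length lam \<and> j < lam ! i}"

(* semistandard Young tableaux of shape lam with entries in {1..m};
   a tableau is a filling T of the cells, taken to be 0 outside the diagram *)
definition ssyt :: "nat list \<Rightarrow> nat \<Rightarrow> (nat \<times> nat \<Rightarrow> nat) set" where
  "ssyt lam m = {T.
     (\<forall>c. c \<notin> young_cells lam \<longrightarrow> T c = 0) \<and>
     (\<forall>c\<in>young_cells lam. T c \<in> {1..m}) \<and>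
     (\<forall>i j. (i, j) \<in> young_cells lam \<and> (i, Suc j) \<in> young_cells lam \<longrightarrow> T (i, j) \<le> T (i, Suc j)) \<and>
     (\<forall>i j. (i, j) \<in> young_cells lam \<and> (Suc i, j) \<in> young_cells lam \<longrightarrow> T (i, j) < T (Suc i, j))}"

definition schur_ones :: "nat list \<Rightarrow> nat \<Rightarrow> nat" where
  "schur_ones lam m = card (ssyt lam m)"

end

theory Submission
  imports Defs "HOL-Library.FuncSet"
begin

(* Double counting. Deleting a value v that does not occur in a tableau T with entries in
   {1..k}, i.e. lowering every entry above v by one, is a bijection between such pairs (T, v)
   and pairs (T', v) with T' a tableau with entries in {1..k-1} and v in {1..k}. Hence
   k s(k-1) = sum over T of (k - #values T), that is
   (k-1) s(k) = k s(k-1) + sum over T of (#values T - 1).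
   The sum is nonnegative, giving (1). For (2), the k - l + 1 tableaux whose row i is constantly
   i + 1 + c each contribute l - 1, and (k - l + 1)(l - 1) >= k - 1. *)

lemma finite_young_cells: "finite (young_cells lam)"
proof -
  have "young_cells lam = (SIGMA i:{..<length lam}. {..<lam ! i})"
    unfolding young_cells_def by auto
  then show ?thesis by simp
qed

lemma finite_ssyt: "finite (ssyt lam m)"
proof (rule finite_subset)
  let ?C = "young_cells lam"
  show "ssyt lam m \<subseteq> (\<lambda>g c. if c \<in> ?C then g c else 0) ` (?C \<rightarrow>\<^sub>E {1..m})"
  proof
    fix T assume T: "T \<in> ssyt lam m"
    then have "T = (\<lambda>c. if c \<in> ?C then restrict T ?C c else 0)"
      unfolding ssyt_def by auto
    moreover have "restrict T ?C \<in> ?C \<rightarrow>\<^sub>E {1..m}"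
      using T unfolding ssyt_def by auto
    ultimately show "T \<in> (\<lambda>g c. if c \<in> ?C then g c else 0) ` (?C \<rightarrow>\<^sub>E {1..m})" by blast
  qed
  show "finite ((\<lambda>g c. if c \<in> ?C then g c else 0) ` (?C \<rightarrow>\<^sub>E {1..m}))"
    by (intro finite_imageI finite_PiE finite_young_cells) auto
qed

lemma ssyt_values_subset: "T \<in> ssyt lam k \<Longrightarrow> T ` young_cells lam \<subseteq> {1..k}"
  unfolding ssyt_def by blast

lemma ssyt_comp:
  assumes T: "T \<in> ssyt lam m" and "f 0 = 0"
    and range: "f ` T ` young_cells lam \<subseteq> {1..n}"
    and mono: "strict_mono_on (T ` young_cells lam) f"
  shows "f \<circ> T \<in> ssyt lam n"
  using T unfolding ssyt_def
  using assms(2) range strict_mono_on_leD[OF mono] strict_mono_onD[OF mono]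
  by (auto simp: image_subset_iff)

definition skip_value :: "nat \<Rightarrow> nat \<Rightarrow> nat" where
  "skip_value v x = (if v \<le> x then Suc x else x)"

definition unskip_value :: "nat \<Rightarrow> nat \<Rightarrow> nat" where
  "unskip_value v x = (if v < x then x - 1 else x)"

lemma skip_value_neq: "skip_value v x \<noteq> v"
  unfolding skip_value_def by auto

lemma unskip_skip_value: "unskip_value v (skip_value v x) = x"
  unfolding skip_value_def unskip_value_def by auto

lemma skip_unskip_value: "x \<noteq> v \<Longrightarrow> skip_value v (unskip_value v x) = x"
  unfolding skip_value_def unskip_value_def by auto

lemma ssyt_values_neq:
  assumes "T \<in> ssyt lam k" "0 < v" "v \<notin> T ` young_cells lam"
  shows "T c \<noteq> v"
proof (cases "c \<in> young_cells lam")
  case False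
  then have "T c = 0" using assms(1) unfolding ssyt_def by blast
  then show ?thesis using assms(2) by simp
qed (use assms(3) in blast)

lemma skip_value_ssyt:
  assumes "T \<in> ssyt lam (k - 1)" "0 < v" "v \<le> k"
  shows "skip_value v \<circ> T \<in> ssyt lam k"
proof (rule ssyt_comp[OF assms(1)])
  have "\<And>c. c \<in> young_cells lam \<Longrightarrow> T c \<in> {1..k - 1}"
    using assms(1) unfolding ssyt_def by blast
  then show "skip_value v ` T ` young_cells lam \<subseteq> {1..k}"
    using assms(2,3) unfolding skip_value_def by force
  show "strict_mono_on (T ` young_cells lam) (skip_value v)"
    by (rule strict_mono_onI) (auto simp: skip_value_def)
qed (use assms(2) in \<open>simp add: skip_value_def\<close>)

lemma unskip_value_ssyt:
  assumes T: "T \<in> ssyt lam k" and v: "0 < v" "v \<le> k" "v \<notin> T ` young_cells lam"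
  shows "unskip_value v \<circ> T \<in> ssyt lam (k - 1)"
proof (rule ssyt_comp[OF T])
  have "\<And>c. c \<in> young_cells lam \<Longrightarrow> T c \<in> {1..k} - {v}"
    using T v unfolding ssyt_def by blast
  then show "unskip_value v ` T ` young_cells lam \<subseteq> {1..k - 1}"
    using v(1,2) unfolding unskip_value_def by (force simp: image_subset_iff)
  show "strict_mono_on (T ` young_cells lam) (unskip_value v)"
  proof (rule strict_mono_onI)
    fix x y assume "x \<in> T ` young_cells lam" "y \<in> T ` young_cells lam" "x < y"
    moreover from this have "x \<noteq> v" using v(3) by blast
    ultimately show "unskip_value v x < unskip_value v y"
      unfolding unskip_value_def by auto
  qed
qed (simp add: unskip_value_def)

lemma card_ssyt_missing_value_pairs:
  "card (SIGMA T:ssyt lam k. {1..k} - T ` young_cells lam) = k * card (ssyt lam (k - 1))"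
proof -
  have "bij_betw (\<lambda>(T, v). (skip_value v \<circ> T, v)) (ssyt lam (k - 1) \<times> {1..k})
          (SIGMA T:ssyt lam k. {1..k} - T ` young_cells lam)"
  proof (rule bij_betw_byWitness[where f' = "\<lambda>(T, v). (unskip_value v \<circ> T, v)"])
    show "\<forall>p\<in>ssyt lam (k - 1) \<times> {1..k}.
            (\<lambda>(T, v). (unskip_value v \<circ> T, v)) ((\<lambda>(T, v). (skip_value v \<circ> T, v)) p) = p"
      by (auto simp: comp_def unskip_skip_value)
    show "\<forall>p\<in>SIGMA T:ssyt lam k. {1..k} - T ` young_cells lam.
            (\<lambda>(T, v). (skip_value v \<circ> T, v)) ((\<lambda>(T, v). (unskip_value v \<circ> T, v)) p) = p"
      by (auto simp: comp_def skip_unskip_value ssyt_values_neq)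
    show "(\<lambda>(T, v). (skip_value v \<circ> T, v)) ` (ssyt lam (k - 1) \<times> {1..k})
            \<subseteq> (SIGMA T:ssyt lam k. {1..k} - T ` young_cells lam)"
    proof (rule image_subsetI, clarify)
      fix T v assume "T \<in> ssyt lam (k - 1)" "v \<in> {1..k}"
      then show "skip_value v \<circ> T \<in> ssyt lam k \<and> v \<in> {1..k} - (skip_value v \<circ> T) ` young_cells lam"
        using skip_value_ssyt[of T lam k v] skip_value_neq[of v, THEN not_sym] by auto
    qed
    show "(\<lambda>(T, v). (unskip_value v \<circ> T, v)) ` (SIGMA T:ssyt lam k. {1..k} - T ` young_cells lam)
            \<subseteq> ssyt lam (k - 1) \<times> {1..k}"
    proof (rule image_subsetI, clarify)
      fix T v assume "T \<in> ssyt lam k" "v \<in> {1..k}" "v \<notin> T ` young_cells lam"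
      then show "unskip_value v \<circ> T \<in> ssyt lam (k - 1)"
        using unskip_value_ssyt[of T lam k v] by auto
    qed
  qed
  then show ?thesis
    by (simp add: bij_betw_same_card[symmetric] card_cartesian_product)
qed

lemma schur_ones_pred_identity:
  assumes "young_cells lam \<noteq> {}"
  shows "k * schur_ones lam (k - 1) + (\<Sum>T\<in>ssyt lam k. card (T ` young_cells lam) - 1)
           = (k - 1) * schur_ones lam k"
proof -
  have values_card: "1 \<le> card (T ` young_cells lam)" "card (T ` young_cells lam) \<le> k"
    if "T \<in> ssyt lam k" for T
    using assms finite_young_cells card_mono[OF _ ssyt_values_subset[OF that]]
    by (auto simp: Suc_le_eq card_gt_0_iff)
  have "k * schur_ones lam (k - 1) = (\<Sum>T\<in>ssyt lam k. card ({1..k} - T ` young_cells lam))"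
    unfolding schur_ones_def card_ssyt_missing_value_pairs[symmetric]
    using finite_ssyt by (intro card_SigmaI) auto
  also have "\<dots> = (\<Sum>T\<in>ssyt lam k. k - card (T ` young_cells lam))"
    using ssyt_values_subset finite_young_cells by (intro sum.cong refl) (simp add: card_Diff_subset)
  finally have "k * schur_ones lam (k - 1) + (\<Sum>T\<in>ssyt lam k. card (T ` young_cells lam) - 1)
      = (\<Sum>T\<in>ssyt lam k. (k - card (T ` young_cells lam)) + (card (T ` young_cells lam) - 1))"
    by (simp add: sum.distrib)
  also have "\<dots> = (\<Sum>T\<in>ssyt lam k. k - 1)"
    using values_card by (intro sum.cong refl) simp
  finally show ?thesis
    unfolding schur_ones_def by (simp add: mult.commute)
qed

lemma part_length_partition: "is_partition lam \<Longrightarrow> part_length lam = length lam"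
  unfolding is_partition_def part_length_def by (simp add: filter_id_conv)

lemma partition_first_column:
  assumes "is_partition lam" "i < length lam"
  shows "(i, 0) \<in> young_cells lam"
  using assms unfolding is_partition_def young_cells_def by auto

definition row_shift_tableau :: "nat list \<Rightarrow> nat \<Rightarrow> nat \<times> nat \<Rightarrow> nat" where
  "row_shift_tableau lam c = (\<lambda>(i, j). if (i, j) \<in> young_cells lam then i + 1 + c else 0)"

lemma row_shift_tableau_ssyt:
  assumes "c + length lam \<le> k"
  shows "row_shift_tableau lam c \<in> ssyt lam k"
  using assms unfolding ssyt_def row_shift_tableau_def young_cells_def by auto

lemma row_shift_tableau_values:
  assumes "is_partition lam"
  shows "row_shift_tableau lam c ` young_cells lam = (\<lambda>i. i + 1 + c) ` {..<length lam}"
proof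
  show "row_shift_tableau lam c ` young_cells lam \<subseteq> (\<lambda>i. i + 1 + c) ` {..<length lam}"
    unfolding row_shift_tableau_def young_cells_def by auto
  show "(\<lambda>i. i + 1 + c) ` {..<length lam} \<subseteq> row_shift_tableau lam c ` young_cells lam"
  proof (rule image_subsetI)
    fix i assume "i \<in> {..<length lam}"
    then have "(i, 0) \<in> young_cells lam" using partition_first_column[OF assms] by simp
    then show "i + 1 + c \<in> row_shift_tableau lam c ` young_cells lam"
      by (force simp: row_shift_tableau_def)
  qed
qed

lemma card_row_shift_tableau_values:
  "is_partition lam \<Longrightarrow> card (row_shift_tableau lam c ` young_cells lam) = length lam"
  by (simp add: row_shift_tableau_values card_image inj_on_def)

lemma inj_row_shift_tableau:
  assumes "(0, 0) \<in> young_cells lam"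
  shows "inj (row_shift_tableau lam)"
proof (rule injI)
  fix c d assume "row_shift_tableau lam c = row_shift_tableau lam d"
  then have "row_shift_tableau lam c (0, 0) = row_shift_tableau lam d (0, 0)" by simp
  then show "c = d" using assms unfolding row_shift_tableau_def by simp
qed

lemma ssyt_excess_values_lower_bound:
  assumes lam: "is_partition lam" and l: "2 \<le> length lam" "length lam \<le> k"
  shows "k - 1 \<le> (\<Sum>T\<in>ssyt lam k. card (T ` young_cells lam) - 1)"
proof -
  let ?l = "length lam"
  let ?S = "row_shift_tableau lam ` {0..k - ?l}"
  have "inj_on (row_shift_tableau lam) {0..k - ?l}"
    using inj_row_shift_tableau partition_first_column[OF lam] l inj_on_subset by fastforce
  then have "(\<Sum>T\<in>?S. card (T ` young_cells lam) - 1) = (k - ?l + 1) * (?l - 1)"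
    by (simp add: sum.reindex card_row_shift_tableau_values[OF lam])
  moreover have "?S \<subseteq> ssyt lam k"
    using l row_shift_tableau_ssyt by auto
  then have "(\<Sum>T\<in>?S. card (T ` young_cells lam) - 1)
               \<le> (\<Sum>T\<in>ssyt lam k. card (T ` young_cells lam) - 1)"
    by (intro sum_mono2 finite_ssyt) auto
  moreover have "k - 1 \<le> (k - ?l + 1) * (?l - 1)"
  proof -
    have "1 \<le> ?l - 1" using l by linarith
    then have "k - ?l \<le> (k - ?l) * (?l - 1)" using mult_le_mono2 by fastforce
    then show ?thesis using l by (simp add: algebra_simps)
  qed
  ultimately show ?thesis by linarith
qed

lemma ratio_identity:
  fixes a b s x :: real
  assumes "1 < x" "b * x + s = a * (x - 1)"
  shows "a / x = b / (x - 1) + s / (x * (x - 1))"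
proof -
  have "x \<noteq> 0" "x - 1 \<noteq> 0" using assms(1) by auto
  then have "b / (x - 1) + s / (x * (x - 1)) = (b * x + s) / (x * (x - 1))"
    by (simp add: add_divide_distrib)
  also have "\<dots> = a / x" using \<open>x - 1 \<noteq> 0\<close> by (simp add: assms(2))
  finally show ?thesis ..
qed

theorem lemma4p1:
  fixes lam :: "nat list"
  assumes "is_partition lam" and "lam \<noteq> []"
  shows "(\<forall>k::nat. k \<ge> 2 \<longrightarrow>
           real (schur_ones lam k) / real k \<ge> real (schur_ones lam (k - 1)) / real (k - 1))
      \<and> (\<forall>k::nat. k \<ge> 2 \<longrightarrow> 2 \<le> part_length lam \<longrightarrow> part_length lam \<le> k - 1 \<longrightarrow>
           real (schur_ones lam k) / real k \<ge> real (schur_ones lam (k - 1)) / real (k - 1) + 1 / real k)"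
proof (intro conjI allI impI)
  fix k :: nat assume k: "2 \<le> k"
  let ?a = "real (schur_ones lam k)" and ?b = "real (schur_ones lam (k - 1))"
  define s where "s = (\<Sum>T\<in>ssyt lam k. card (T ` young_cells lam) - 1)"
  have "young_cells lam \<noteq> {}" using partition_first_column[OF assms(1)] assms(2) by blast
  from schur_ones_pred_identity[OF this, of k, folded s_def]
  have "real (k * schur_ones lam (k - 1) + s) = real ((k - 1) * schur_ones lam k)"
    by (rule arg_cong)
  then have "?b * real k + real s = ?a * (real k - 1)"
    using k by (simp add: of_nat_diff mult.commute)
  with k have ratio: "?a / real k = ?b / real (k - 1) + real s / (real k * (real k - 1))"
    using ratio_identity[of "real k"] by (simp add: of_nat_diff)
  then show "?b / real (k - 1) \<le> ?a / real k"
    using k by simp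
  assume "2 \<le> part_length lam" "part_length lam \<le> k - 1"
  then have "k - 1 \<le> s"
    unfolding s_def part_length_partition[OF assms(1)]
    by (intro ssyt_excess_values_lower_bound[OF assms(1)]) auto
  then have "real k - 1 \<le> real s"
    using k by (simp add: of_nat_diff)
  then have "real k * (real k - 1) \<le> real k * real s"
    by (rule mult_left_mono) simp
  then have "1 / real k \<le> real s / (real k * (real k - 1))"
    using k by (simp add: field_simps)
  then show "?b / real (k - 1) + 1 / real k \<le> ?a / real k"
    using ratio by simp
qed

end
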